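(* Fix $d>0$ and $J_d\ge1$, and assume (1) $t_i^{\max}(d)>0$ for all $i$ and (2) $\sum_{i=1}^Ub_i^{\min}(t_i^{\max}(d))\le B$ (with each $b_i^{\min}(t_i^{\max}(d))$ finite). Let $c_i=p_i^{\max}g_i/N_0$ and let $\boldsymbol b^{(0)}$ be the optimal solution of $$\min_{\boldsymbol b}\ \sum_{i=1}^U\frac{N_id}{b_i\log_2(1+c_i/b_i)}\quad\text{s.t.}\quad\sum_{i=1}^Ub_i\le B,\quad b_i\ge b_i^{\min}\big(t_i^{\max}(d)\big)\ \forall i.$$ Set $p_i^{(0)}=p_i^{\max}$, $t_i^{(0)}=\dfrac{N_id}{b_i^{(0)}\log_2(1+c_i/b_i^{(0)})}$ and $f_i^{(0)}=\dfrac{Z_id+(J_d-1)G_id}{T-J_dt_i^{(0)}}$. Then $J_dt_i^{(0)}<T$ and $(\boldsymbol t^{(0)},\boldsymbol b^{(0)},\boldsymbol p^{(0)},\boldsymbol f^{(0)})$ satisfies, for all $i$, $$\frac{Z_id+(J_d-1)G_id}{f_i}+J_dt_i\le T,\quad t_ib_i\log_2\!\Big(1+\frac{p_ig_i}{N_0b_i}\Big)\ge N_id,\quad\sum_{j}b_j\le B,\quad 0\le p_i\le p_i^{\max},\quad 0<f_i\le f_i^{\max},\quad b_i>0,\quad t_i\ge0.$$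
   Context: $U$ users; $t_i,b_i,p_i,f_i$ are user $i$'s per-round transmission time, bandwidth, transmit power and CPU frequency, with limits $p_i^{\max}>0$, $f_i^{\max}>0$; $g_i>0$ the channel power gain, $N_0>0$ the noise power spectral density, $N_i>0$ the number of classes (payload $N_id$ bits), $B>0$ the total bandwidth, $T>0$ the total time budget; $Z_i=D_iC_i^{(\mathrm{init})}>0$ and $G_i=D_iC_i^{(\mathrm{ret})}\ge0$ the per-dimension CPU cycles of the first round and each retraining round. Define $t_i^{\max}(d)=\big(T-\frac{Z_id+(J_d-1)G_id}{f_i^{\max}}\big)/J_d$ and, for $t>0$, $b_i^{\min}(t)=\inf\{b>0:\ t\,b\log_2(1+\frac{p_i^{\max}g_i}{N_0b})\ge N_id\}$. *)

theory Defs
  imports Complex_Main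
begin

text \<open>Maximal per-round transmission time t_i^max(d) of a user with first-round
  cycles per dimension Z, retraining cycles per dimension G, max CPU frequency fmax,
  total time budget T and J rounds.\<close>
definition tmax :: "real \<Rightarrow> real \<Rightarrow> real \<Rightarrow> nat \<Rightarrow> real \<Rightarrow> real \<Rightarrow> real" where
  "tmax T Z G J fmax d = (T - (Z * d + (real J - 1) * G * d) / fmax) / real J"

definition bmin :: "real \<Rightarrow> real \<Rightarrow> real \<Rightarrow> real \<Rightarrow> real \<Rightarrow> real \<Rightarrow> real" where
  "bmin pmax g N0 N d t = Inf {b. b > 0 \<and> t * b * log 2 (1 + pmax * g / (N0 * b)) \<ge> N * d}"

definition obj :: "nat \<Rightarrow> (nat \<Rightarrow> real) \<Rightarrow> (nat \<Rightarrow> real) \<Rightarrow> real \<Rightarrow> (nat \<Rightarrow> real) \<Rightarrow> real" where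
  "obj U N c d b = (\<Sum>i<U. N i * d / (b i * log 2 (1 + c i / b i)))"

end

theory Submission
  imports Defs "HOL-Real_Asymp.Real_Asymp"
begin

(* Everything reduces to one fact about the rate r(b) = b log2(1 + c/b): it is continuous and
   nondecreasing on b > 0 and tends to 0 as b -> 0+. Hence the infimum defining b^min(t) is
   positive and itself feasible, and every b >= b^min(t) satisfies t r(b) >= N d. So b0 meets the
   rate constraint in time t0 <= t^max(d), which leaves T - J t0 >= (Z d + (J-1) G d)/f^max > 0 for
   computation, i.e. f0 <= f^max. *)

definition rate :: "real \<Rightarrow> real \<Rightarrow> real" where
  "rate c b = b * log 2 (1 + c / b)"

lemma ln_one_plus_ge_divide:
  fixes u :: real
  assumes "u \<ge> 0"
  shows "u / (1 + u) \<le> ln (1 + u)"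
proof -
  have "ln (1 / (1 + u)) \<le> 1 / (1 + u) - 1"
    using assms by (intro ln_le_minus_one) auto
  with assms show ?thesis by (simp add: ln_div field_simps)
qed

lemma rate_has_real_derivative:
  assumes "c > 0" "x > 0"
  shows "(rate c has_real_derivative log 2 (1 + c / x) - c / ((x + c) * ln 2)) (at x)"
proof -
  have "1 + c / x > 0" using assms by (simp add: add_pos_pos)
  then have "(rate c has_real_derivative
      1 * log 2 (1 + c / x) + x * (- (c / x^2) / ((1 + c / x) * ln 2))) (at x)"
    unfolding rate_def [abs_def] using assms
    by (auto intro!: derivative_eq_intros simp: power2_eq_square)
  moreover have "x * (- (c / x^2) / ((1 + c / x) * ln 2)) = - (c / ((x + c) * ln 2))"
    using assms by (simp add: divide_simps power2_eq_square)
  ultimately show ?thesis by simp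
qed

lemma rate_mono:
  assumes "c > 0" "0 < a" "a \<le> b"
  shows "rate c a \<le> rate c b"
  using \<open>a \<le> b\<close>
proof (rule DERIV_nonneg_imp_nondecreasing)
  fix x assume "a \<le> x"
  with assms have "x > 0" by simp
  have "c / (x + c) \<le> ln (1 + c / x)"
    using ln_one_plus_ge_divide[of "c / x"] assms \<open>x > 0\<close> by (simp add: field_simps)
  then have "c / ((x + c) * ln 2) \<le> log 2 (1 + c / x)"
    by (simp add: log_def divide_right_mono flip: divide_divide_eq_left)
  then show "\<exists>y. (rate c has_real_derivative y) (at x) \<and> 0 \<le> y"
    using rate_has_real_derivative[OF \<open>c > 0\<close> \<open>x > 0\<close>] by auto
qed

lemma isCont_rate: "c > 0 \<Longrightarrow> x > 0 \<Longrightarrow> isCont (rate c) x"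
  using rate_has_real_derivative by (rule DERIV_isCont)

lemma rate_tendsto_zero: "c > 0 \<Longrightarrow> (rate c \<longlongrightarrow> 0) (at_right 0)"
  unfolding rate_def [abs_def] log_def by real_asymp

lemma rate_pos:
  assumes "c > 0" "b > 0"
  shows "rate c b > 0"
proof -
  have "1 < 1 + c / b" using assms by simp
  then have "log 2 (1 + c / b) > 0" by (subst zero_less_log_cancel_iff) auto
  then show ?thesis using assms by (simp add: rate_def)
qed

lemma Inf_superlevel_set_mem:
  fixes h :: "real \<Rightarrow> real"
  assumes cont: "\<And>x. x > 0 \<Longrightarrow> isCont h x"
    and small: "eventually (\<lambda>x. h x < K) (at_right 0)"
    and ne: "{x. x > 0 \<and> K \<le> h x} \<noteq> {}"
  shows "Inf {x. x > 0 \<and> K \<le> h x} > 0 \<and> K \<le> h (Inf {x. x > 0 \<and> K \<le> h x})"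
proof -
  define S where "S = {x. x > 0 \<and> K \<le> h x}"
  have S_ne: "S \<noteq> {}" using ne unfolding S_def .
  have bdd: "bdd_below S"
    unfolding S_def by (rule bdd_belowI[of _ 0]) auto
  obtain e where "e > 0" and below_e: "\<And>x. 0 < x \<Longrightarrow> x < e \<Longrightarrow> h x < K"
    using small by (auto simp: eventually_at_right_field)
  have "e \<le> Inf S"
  proof (rule cInf_greatest[OF S_ne])
    fix x assume "x \<in> S"
    then show "e \<le> x" using below_e[of x] by (cases "x < e") (auto simp: S_def)
  qed
  with \<open>e > 0\<close> have pos: "Inf S > 0" by linarith
  have "K \<le> h (Inf S)"
  proof (rule ccontr)
    assume "\<not> K \<le> h (Inf S)"
    then have "eventually (\<lambda>x. h x < K) (at (Inf S))"
      using cont[OF pos] unfolding isCont_def by (simp add: order_tendstoD(2))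
    then obtain r where "r > 0" and near: "\<And>x. x \<noteq> Inf S \<Longrightarrow> dist x (Inf S) < r \<Longrightarrow> h x < K"
      by (auto simp: eventually_at)
    \<comment> \<open>points of S come arbitrarily close to Inf S from above, but none lies within r\<close>
    have "Inf S < Inf S + r" using \<open>r > 0\<close> by simp
    then obtain x where "x \<in> S" "x < Inf S + r"
      using cInf_less_iff[OF S_ne bdd] by blast
    moreover have "Inf S \<le> x" using \<open>x \<in> S\<close> bdd by (rule cInf_lower)
    ultimately show False
      using near[of x] \<open>\<not> K \<le> h (Inf S)\<close> by (cases "x = Inf S") (auto simp: S_def dist_real_def)
  qed
  with pos show ?thesis by (simp add: S_def)
qed

lemma le_rate_if_Inf_le:
  fixes c t M b :: real
  assumes "c > 0" "t > 0" "M > 0"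
    and ne: "{x. x > 0 \<and> M \<le> t * rate c x} \<noteq> {}"
    and b: "Inf {x. x > 0 \<and> M \<le> t * rate c x} \<le> b"
  shows "b > 0 \<and> M \<le> t * rate c b"
proof -
  define b' where "b' = Inf {x. x > 0 \<and> M \<le> t * rate c x}"
  have "((\<lambda>x. t * rate c x) \<longlongrightarrow> t * 0) (at_right 0)"
    using rate_tendsto_zero[OF \<open>c > 0\<close>] by (intro tendsto_intros)
  then have "eventually (\<lambda>x. t * rate c x < M) (at_right 0)"
    using \<open>M > 0\<close> by (simp add: order_tendstoD(2))
  moreover have "isCont (\<lambda>x. t * rate c x) x" if "x > 0" for x
    using isCont_rate[OF \<open>c > 0\<close> that] by (rule isCont_mult[OF continuous_const])
  ultimately have "b' > 0" and "M \<le> t * rate c b'"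
    using Inf_superlevel_set_mem[OF _ _ ne] unfolding b'_def by blast+
  moreover have "b' \<le> b" using b unfolding b'_def .
  then have "t * rate c b' \<le> t * rate c b"
    using rate_mono[OF \<open>c > 0\<close> \<open>b' > 0\<close>] \<open>t > 0\<close> by (simp add: mult_left_mono)
  ultimately show ?thesis using \<open>b' \<le> b\<close> by linarith
qed

lemma le_rate_if_bmin_le:
  assumes "pmax * g / N0 > 0" "t > 0" "N * d > 0"
    and "{b. b > 0 \<and> t * b * log 2 (1 + pmax * g / (N0 * b)) \<ge> N * d} \<noteq> {}"
    and "bmin pmax g N0 N d t \<le> b"
  shows "b > 0 \<and> N * d \<le> t * rate (pmax * g / N0) b"
proof -
  have "{b. b > 0 \<and> t * b * log 2 (1 + pmax * g / (N0 * b)) \<ge> N * d}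
      = {b. b > 0 \<and> N * d \<le> t * rate (pmax * g / N0) b}"
    by (simp add: rate_def mult.assoc)
  with assms show ?thesis
    using le_rate_if_Inf_le[of "pmax * g / N0" t "N * d" b] by (simp add: bmin_def)
qed

lemma rounds_mult_tmax:
  "J \<ge> 1 \<Longrightarrow> real J * tmax T Z G J fmax d = T - (Z * d + (real J - 1) * G * d) / fmax"
  by (simp add: tmax_def)

lemma cpu_frequency_feasible:
  fixes W T fmax t tm :: real and J :: nat
  assumes "W > 0" "fmax > 0" "0 \<le> t" "t \<le> tm" "real J * tm = T - W / fmax"
  defines "f \<equiv> W / (T - real J * t)"
  shows "real J * t < T \<and> W / f + real J * t \<le> T \<and> 0 < f \<and> f \<le> fmax"
proof -
  have "real J * t \<le> T - W / fmax"
    using assms(3-5) by (metis mult_left_mono of_nat_0_le_iff)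
  moreover have "W / fmax > 0" using assms(1,2) by simp
  ultimately have slack: "W / fmax \<le> T - real J * t" and "T - real J * t > 0" by linarith+
  moreover from slack have "W \<le> fmax * (T - real J * t)" using assms(2) by (simp add: field_simps)
  ultimately show ?thesis
    using assms(1) unfolding f_def by (simp add: divide_le_eq mult.commute)
qed

lemma user_allocation_feasible:
  fixes J :: nat
  assumes "pmax > 0" "g > 0" "N0 > 0" "N > 0" "d > 0" "Z > 0" "G \<ge> 0" "fmax > 0" "J \<ge> 1"
    and tmax_pos: "tmax T Z G J fmax d > 0"
    and ne: "{b. b > 0 \<and> tmax T Z G J fmax d * b * log 2 (1 + pmax * g / (N0 * b)) \<ge> N * d} \<noteq> {}"
    and b: "bmin pmax g N0 N d (tmax T Z G J fmax d) \<le> b"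
    and t: "t = N * d / rate (pmax * g / N0) b"
    and f: "f = (Z * d + (real J - 1) * G * d) / (T - real J * t)"
  shows "real J * t < T \<and> (Z * d + (real J - 1) * G * d) / f + real J * t \<le> T
    \<and> N * d \<le> t * rate (pmax * g / N0) b \<and> 0 < f \<and> f \<le> fmax \<and> b > 0 \<and> 0 \<le> t"
proof -
  define tm where "tm = tmax T Z G J fmax d"
  define W where "W = Z * d + (real J - 1) * G * d"
  have "pmax * g / N0 > 0" "N * d > 0" "W > 0"
    using assms(1-9) by (simp_all add: W_def add_pos_nonneg)
  then have "b > 0" and rate_b: "N * d \<le> tm * rate (pmax * g / N0) b"
    using le_rate_if_bmin_le[OF _ tmax_pos _ ne b] unfolding tm_def by blast+
  then have "rate (pmax * g / N0) b > 0"
    using rate_pos \<open>pmax * g / N0 > 0\<close> by blast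
  then have "0 \<le> t" "t \<le> tm" "N * d = t * rate (pmax * g / N0) b"
    using \<open>N * d > 0\<close> rate_b by (simp_all add: t divide_le_eq)
  moreover have "real J * tm = T - W / fmax"
    unfolding tm_def W_def using \<open>J \<ge> 1\<close> by (rule rounds_mult_tmax)
  ultimately show ?thesis
    using cpu_frequency_feasible[OF \<open>W > 0\<close> \<open>fmax > 0\<close>, of t tm J T] \<open>b > 0\<close>
    unfolding f W_def by simp
qed

theorem proposition3:
  fixes U J :: nat and d B T N0 :: real
    and pmax g N Z G fmax c b0 t0 p0 f0 :: "nat \<Rightarrow> real"
  assumes hB: "B > 0" and hT: "T > 0" and hN0: "N0 > 0"
    and hpar: "\<And>i. i < U \<Longrightarrow> pmax i > 0 \<and> fmax i > 0 \<and> g i > 0 \<and> N i > 0 \<and> Z i > 0 \<and> G i \<ge> 0"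
    and hd: "d > 0" and hJ: "J \<ge> 1"
    and h1: "\<And>i. i < U \<Longrightarrow> tmax T (Z i) (G i) J (fmax i) d > 0"
    and hfin: "\<And>i. i < U \<Longrightarrow> {b. b > 0 \<and> tmax T (Z i) (G i) J (fmax i) d * b
                   * log 2 (1 + pmax i * g i / (N0 * b)) \<ge> N i * d} \<noteq> {}"
    and h2: "(\<Sum>i<U. bmin (pmax i) (g i) N0 (N i) d (tmax T (Z i) (G i) J (fmax i) d)) \<le> B"
    and hc: "\<And>i. c i = pmax i * g i / N0"
    and hb0_feas: "(\<Sum>i<U. b0 i) \<le> B"
      "\<And>i. i < U \<Longrightarrow> b0 i \<ge> bmin (pmax i) (g i) N0 (N i) d (tmax T (Z i) (G i) J (fmax i) d)"
    and hb0_opt: "\<And>b. (\<Sum>i<U. b i) \<le> B \<Longrightarrow>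
        (\<forall>i<U. b i \<ge> bmin (pmax i) (g i) N0 (N i) d (tmax T (Z i) (G i) J (fmax i) d)) \<Longrightarrow>
        obj U N c d b0 \<le> obj U N c d b"
    and hp0: "\<And>i. p0 i = pmax i"
    and ht0: "\<And>i. t0 i = N i * d / (b0 i * log 2 (1 + c i / b0 i))"
    and hf0: "\<And>i. f0 i = (Z i * d + (real J - 1) * G i * d) / (T - real J * t0 i)"
  shows "\<forall>i<U. real J * t0 i < T
     \<and> (Z i * d + (real J - 1) * G i * d) / f0 i + real J * t0 i \<le> T
     \<and> t0 i * b0 i * log 2 (1 + p0 i * g i / (N0 * b0 i)) \<ge> N i * d
     \<and> (\<Sum>j<U. b0 j) \<le> B
     \<and> 0 \<le> p0 i \<and> p0 i \<le> pmax i
     \<and> 0 < f0 i \<and> f0 i \<le> fmax i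
     \<and> b0 i > 0 \<and> t0 i \<ge> 0"
proof (intro allI impI)
  fix i assume "i < U"
  then have "pmax i > 0" "g i > 0" "N i > 0" "Z i > 0" "G i \<ge> 0" "fmax i > 0"
    using hpar by auto
  have t0: "t0 i = N i * d / rate (pmax i * g i / N0) (b0 i)"
    using ht0 hc by (simp add: rate_def)
  have log_eq: "b0 i * log 2 (1 + p0 i * g i / (N0 * b0 i)) = rate (pmax i * g i / N0) (b0 i)"
    by (simp add: hp0 rate_def)
  show "real J * t0 i < T
     \<and> (Z i * d + (real J - 1) * G i * d) / f0 i + real J * t0 i \<le> T
     \<and> t0 i * b0 i * log 2 (1 + p0 i * g i / (N0 * b0 i)) \<ge> N i * d
     \<and> (\<Sum>j<U. b0 j) \<le> B
     \<and> 0 \<le> p0 i \<and> p0 i \<le> pmax i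
     \<and> 0 < f0 i \<and> f0 i \<le> fmax i
     \<and> b0 i > 0 \<and> t0 i \<ge> 0"
    using user_allocation_feasible[OF \<open>pmax i > 0\<close> \<open>g i > 0\<close> hN0 \<open>N i > 0\<close> hd \<open>Z i > 0\<close>
        \<open>G i \<ge> 0\<close> \<open>fmax i > 0\<close> hJ h1[OF \<open>i < U\<close>] hfin[OF \<open>i < U\<close>] hb0_feas(2)[OF \<open>i < U\<close>]
        t0 hf0] hb0_feas(1) \<open>pmax i > 0\<close>
    unfolding mult.assoc[of "t0 i"] log_eq by (simp add: hp0)
qed

end
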